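(* Under Assumptions A1–A4, for every evaluation step $n\in\{E,2E,3E,\dots\}$ the lengths produced by the core Two-Tailed Averaging algorithm satisfy $S(n)<\mathcal{O}(n)$ and $L(n)<2\mathcal{O}(n)+E$.
   Context: Let $\Theta=\mathbb{R}^d$, let $(\theta_t)_{t\in\mathbb{N}_0}$ be a sequence in $\Theta$, let $f\colon\Theta\to\mathbb{R}$ be a loss function, and let $E\in\mathbb{N}$ be the evaluation period. Evaluation steps are the multiples of $E$. For integers $t\ge \Delta\ge 1$ write $\mathrm{avg}(t,\Delta)=\frac{1}{\Delta}\sum_{i=t+1-\Delta}^{t}\theta_i$; set $f(\mathrm{avg}(t,0))=+\infty$. Core Two-Tailed Averaging: it maintains integers $S,L$ and vectors $\theta^S,\theta^L$, initially $S=L=0$, $\theta^S=\theta^L=0$. For $t=1,2,\dots$: first $\theta_t$ is added to both averages, i.e. $\theta^S\leftarrow\theta^S+(\theta_t-\theta^S)/(S+1)$, $S\leftarrow S+1$, and $\theta^L\leftarrow\theta^L+(\theta_t-\theta^L)/(L+1)$, $L\leftarrow L+1$ (so $\theta^S=\mathrm{avg}(t,S)$, $\theta^L=\mathrm{avg}(t,L)$). Then, if $E$ divides $t$: if $f(\theta^S)\le f(\theta^L)$, a switch is performed: $L\leftarrow S$, $\theta^L\leftarrow\theta^S$, $S\leftarrow 0$. $S(t),L(t)$ denote the values after the $t$-th pass through the loop. Optimal length: for $t\ge1$, $\mathcal{O}(t)$ is a (fixed) minimizer of $\Delta\mapsto f(\mathrm{avg}(t,\Delta))$ over $\Delta\in\{1,\dots,t\}$;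 $\mathcal{O}_E(n)=\lfloor \mathcal{O}(n)/E\rfloor E$ and $\mathcal{O}^E(n)=\lceil \mathcal{O}(n)/E\rceil E$. Assumptions (for all evaluation steps $n\ge E$): A1: $\Delta\mapsto f(\mathrm{avg}(n,\Delta))$ is strictly decreasing on $\Delta\in\{0,E,2E,\dots,\mathcal{O}_E(n)\}$. A2: for every integer $n_+$ with $\mathcal{O}^E(n)\le n_+\le n$, $f(\mathrm{avg}(n,\mathcal{O}^E(n)))\le f(\mathrm{avg}(n,n_+))$. A3: there exists a positive multiple $n_s$ of $E$ with $\mathcal{O}(n+n_s)-\mathcal{O}(n)<n_s$. A4: $\mathcal{O}(n)\le\mathcal{O}(n+E)$. *)

theory Defs
  imports "HOL-Analysis.Analysis"
begin

definition avg :: "(nat \<Rightarrow> real ^ 'd) \<Rightarrow> nat \<Rightarrow> nat \<Rightarrow> real ^ 'd" where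
  "avg \<theta> t \<Delta> = (1 / real \<Delta>) *\<^sub>R (\<Sum>i\<in>{t + 1 - \<Delta>..t}. \<theta> i)"

definition favg :: "(real ^ 'd \<Rightarrow> real) \<Rightarrow> (nat \<Rightarrow> real ^ 'd) \<Rightarrow> nat \<Rightarrow> nat \<Rightarrow> ereal" where
  "favg f \<theta> t \<Delta> = (if \<Delta> = 0 then \<infinity> else ereal (f (avg \<theta> t \<Delta>)))"

fun tta :: "(real ^ 'd \<Rightarrow> real) \<Rightarrow> (nat \<Rightarrow> real ^ 'd) \<Rightarrow> nat \<Rightarrow> nat
            \<Rightarrow> nat \<times> nat \<times> (real ^ 'd) \<times> (real ^ 'd)" where
  "tta f \<theta> E 0 = (0, 0, 0, 0)"
| "tta f \<theta> E (Suc t) =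
     (case tta f \<theta> E t of (S, L, \<theta>S, \<theta>L) \<Rightarrow>
       let \<theta>S' = \<theta>S + (1 / real (S + 1)) *\<^sub>R (\<theta> (Suc t) - \<theta>S);
           S' = S + 1;
           \<theta>L' = \<theta>L + (1 / real (L + 1)) *\<^sub>R (\<theta> (Suc t) - \<theta>L);
           L' = L + 1
       in if E dvd Suc t \<and> f \<theta>S' \<le> f \<theta>L' then (0, S', \<theta>S', \<theta>S')
          else (S', L', \<theta>S', \<theta>L'))"

definition S_len :: "(real ^ 'd \<Rightarrow> real) \<Rightarrow> (nat \<Rightarrow> real ^ 'd) \<Rightarrow> nat \<Rightarrow> nat \<Rightarrow> nat" where
  "S_len f \<theta> E t = fst (tta f \<theta> E t)"

definition L_len :: "(real ^ 'd \<Rightarrow> real) \<Rightarrow> (nat \<Rightarrow> real ^ 'd) \<Rightarrow> nat \<Rightarrow> nat \<Rightarrow> nat" where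
  "L_len f \<theta> E t = fst (snd (tta f \<theta> E t))"

definition OptE_floor :: "(nat \<Rightarrow> nat) \<Rightarrow> nat \<Rightarrow> nat \<Rightarrow> nat" where
  "OptE_floor Opt E n = (Opt n div E) * E"

definition OptE_ceil :: "(nat \<Rightarrow> nat) \<Rightarrow> nat \<Rightarrow> nat \<Rightarrow> nat" where
  "OptE_ceil Opt E n = ((Opt n + E - 1) div E) * E"

end

theory Submission
  imports Defs
begin

text \<open>
  Between two evaluation steps both lengths grow by \<open>E\<close>. At evaluation steps one shows
  \<open>S < \<O>(n)\<close> and \<open>L < S + \<O>(n) + E\<close> by induction. Since \<open>S\<close> is a multiple of \<open>E\<close> and
  \<open>S < \<O>(n) \<le> \<O>(n + E)\<close> by A4, at the next evaluation \<open>S + E\<close> is at most \<open>\<O>\<^sup>E(n + E)\<close>. If it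
  reaches the new optimum it equals \<open>\<O>\<^sup>E\<close>, and A2 says that this average is at least as
  good as the long one, which forces a switch. After a switch \<open>L\<close> is the old \<open>S + E \<le> \<O>\<^sup>E\<close>,
  which is less than the optimum plus \<open>E\<close>. Only A2, A4 and \<open>\<O>(E) \<ge> 1\<close> are needed.
\<close>

lemma avg_Suc:
  assumes "k \<le> t"
  shows "avg \<theta> (Suc t) (Suc k) = avg \<theta> t k + (1 / real (k + 1)) *\<^sub>R (\<theta> (Suc t) - avg \<theta> t k)"
proof -
  define A where "A = (\<Sum>i\<in>{t + 1 - k..t}. \<theta> i)"
  define c where "c = 1 / real (k + 1)"
  have "avg \<theta> (Suc t) (Suc k) = c *\<^sub>R (A + \<theta> (Suc t))"
    using assms by (simp add: avg_def A_def c_def)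
  moreover have "(1 - c) *\<^sub>R avg \<theta> t k = c *\<^sub>R A"
    by (cases "k = 0") (simp_all add: avg_def A_def c_def field_simps)
  ultimately show ?thesis
    unfolding c_def[symmetric] by (simp add: algebra_simps)
qed

lemma running_mean_update:
  assumes "k \<le> t" and "k \<noteq> 0 \<longrightarrow> a = avg \<theta> t k"
  shows "a + (1 / real (k + 1)) *\<^sub>R (\<theta> (Suc t) - a) = avg \<theta> (Suc t) (k + 1)"
  using assms avg_Suc[of k t \<theta>] by (cases "k = 0") (auto simp: avg_def)

text \<open>After a switch \<open>\<theta>\<^sup>S\<close> is stale, which is harmless: the next update gives the new
  iterate weight \<open>1\<close>.\<close>

lemma tta_invariant:
  fixes f :: "real ^ 'd \<Rightarrow> real" and \<theta> :: "nat \<Rightarrow> real ^ 'd" and E t :: nat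
  shows "case tta f \<theta> E t of (S, L, \<theta>S, \<theta>L) \<Rightarrow> S \<le> L \<and> L \<le> t \<and> S mod E = t mod E
           \<and> (S \<noteq> 0 \<longrightarrow> \<theta>S = avg \<theta> t S) \<and> (L \<noteq> 0 \<longrightarrow> \<theta>L = avg \<theta> t L)"
proof (induction t)
  case 0
  then show ?case by simp
next
  case (Suc t)
  obtain S L \<theta>S \<theta>L where st: "tta f \<theta> E t = (S, L, \<theta>S, \<theta>L)"
    by (cases "tta f \<theta> E t") auto
  with Suc.IH have I: "S \<le> L" "L \<le> t" "S mod E = t mod E"
    "S \<noteq> 0 \<longrightarrow> \<theta>S = avg \<theta> t S" "L \<noteq> 0 \<longrightarrow> \<theta>L = avg \<theta> t L"
    by auto
  have "\<theta>S + (1 / real (S + 1)) *\<^sub>R (\<theta> (Suc t) - \<theta>S) = avg \<theta> (Suc t) (S + 1)"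
    using I by (intro running_mean_update) auto
  moreover have "\<theta>L + (1 / real (L + 1)) *\<^sub>R (\<theta> (Suc t) - \<theta>L) = avg \<theta> (Suc t) (L + 1)"
    using I by (intro running_mean_update) auto
  moreover have "Suc S mod E = Suc t mod E"
    using I(3) by (metis mod_Suc_eq)
  ultimately show ?case
    using st I by (auto simp: Let_def)
qed

lemma S_len_le_L_len: "S_len f \<theta> E t \<le> L_len f \<theta> E t"
  and L_len_le: "L_len f \<theta> E t \<le> t"
  and S_len_mod: "S_len f \<theta> E t mod E = t mod E"
  using tta_invariant[where f = f and \<theta> = \<theta> and E = E and t = t]
  by (auto simp: S_len_def L_len_def split: prod.splits)

lemma tta_lengths_Suc:
  fixes f :: "real ^ 'd \<Rightarrow> real" and \<theta> :: "nat \<Rightarrow> real ^ 'd" and E t :: nat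
  defines "switch \<equiv> E dvd Suc t \<and>
    f (avg \<theta> (Suc t) (S_len f \<theta> E t + 1)) \<le> f (avg \<theta> (Suc t) (L_len f \<theta> E t + 1))"
  shows "S_len f \<theta> E (Suc t) = (if switch then 0 else S_len f \<theta> E t + 1)"
    and "L_len f \<theta> E (Suc t) = (if switch then S_len f \<theta> E t + 1 else L_len f \<theta> E t + 1)"
proof -
  obtain S L \<theta>S \<theta>L where st: "tta f \<theta> E t = (S, L, \<theta>S, \<theta>L)"
    by (cases "tta f \<theta> E t") auto
  with tta_invariant[where f = f and \<theta> = \<theta> and E = E and t = t]
  have I: "S \<le> L" "L \<le> t" "S \<noteq> 0 \<longrightarrow> \<theta>S = avg \<theta> t S" "L \<noteq> 0 \<longrightarrow> \<theta>L = avg \<theta> t L"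
    by auto
  have "\<theta>S + (1 / real (S + 1)) *\<^sub>R (\<theta> (Suc t) - \<theta>S) = avg \<theta> (Suc t) (S + 1)"
    using I by (intro running_mean_update) auto
  moreover have "\<theta>L + (1 / real (L + 1)) *\<^sub>R (\<theta> (Suc t) - \<theta>L) = avg \<theta> (Suc t) (L + 1)"
    using I by (intro running_mean_update) auto
  ultimately show "S_len f \<theta> E (Suc t) = (if switch then 0 else S_len f \<theta> E t + 1)"
    and "L_len f \<theta> E (Suc t) = (if switch then S_len f \<theta> E t + 1 else L_len f \<theta> E t + 1)"
    using st by (simp_all add: switch_def S_len_def L_len_def Let_def)
qed

lemma lengths_within_period:
  assumes "E dvd m" "j < E"
  shows "S_len f \<theta> E (m + j) = S_len f \<theta> E m + j \<and> L_len f \<theta> E (m + j) = L_len f \<theta> E m + j"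
  using assms(2)
proof (induction j)
  case 0
  then show ?case by simp
next
  case (Suc j)
  have "\<not> E dvd Suc j"
    using Suc.prems by (auto dest: dvd_imp_le)
  then have "\<not> E dvd Suc (m + j)"
    using assms(1) by (simp flip: add_Suc_right add: dvd_add_right_iff)
  then show ?case
    using Suc tta_lengths_Suc[of f \<theta> E "m + j"] by simp
qed

lemma lengths_next_eval:
  fixes f :: "real ^ 'd \<Rightarrow> real" and \<theta> :: "nat \<Rightarrow> real ^ 'd"
  assumes "0 < E" "E dvd m"
  defines "switch \<equiv> f (avg \<theta> (m + E) (S_len f \<theta> E m + E)) \<le> f (avg \<theta> (m + E) (L_len f \<theta> E m + E))"
  shows "S_len f \<theta> E (m + E) = (if switch then 0 else S_len f \<theta> E m + E)"
    and "L_len f \<theta> E (m + E) = (if switch then S_len f \<theta> E m + E else L_len f \<theta> E m + E)"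
proof -
  have "Suc (m + (E - 1)) = m + E"
    using assms(1) by simp
  moreover have "E dvd m + E"
    using assms(2) by simp
  ultimately show "S_len f \<theta> E (m + E) = (if switch then 0 else S_len f \<theta> E m + E)"
    and "L_len f \<theta> E (m + E) = (if switch then S_len f \<theta> E m + E else L_len f \<theta> E m + E)"
    using tta_lengths_Suc[of f \<theta> E "m + (E - 1)"] lengths_within_period[OF assms(2), of "E - 1" f \<theta>] assms(1)
    by (simp_all add: switch_def)
qed

lemma multiple_le_round_up:
  fixes x E q :: nat
  assumes "0 < E" "q * E < x"
  shows "(q + 1) * E \<le> (x + E - 1) div E * E"
proof -
  have "(q + 1) * E \<le> x + E - 1"
    using assms by simp
  then have "q + 1 \<le> (x + E - 1) div E"
    using assms(1) by (simp add: less_eq_div_iff_mult_less_eq)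
  then show ?thesis
    by (rule mult_le_mono1)
qed

lemma round_up_le_multiple:
  fixes x E q :: nat
  assumes "0 < E" "x \<le> q * E"
  shows "(x + E - 1) div E * E \<le> q * E"
proof -
  have "x + E - 1 < (q + 1) * E"
    using assms by simp
  then have "(x + E - 1) div E < q + 1"
    using assms(1) by (simp add: div_less_iff_less_mult)
  then have "(x + E - 1) div E \<le> q"
    by simp
  then show ?thesis
    by (rule mult_le_mono1)
qed

lemma eval_lengths_step:
  fixes f :: "real ^ 'd \<Rightarrow> real" and \<theta> :: "nat \<Rightarrow> real ^ 'd"
  assumes "0 < E" "E dvd m"
    and S_lt: "S_len f \<theta> E m < opt"
    and L_lt: "L_len f \<theta> E m < S_len f \<theta> E m + opt + E"
    and opt_le: "opt \<le> opt'"
    and plateau: "\<And>l. (opt' + E - 1) div E * E \<le> l \<Longrightarrow> l \<le> m + E \<Longrightarrow>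
                   favg f \<theta> (m + E) ((opt' + E - 1) div E * E) \<le> favg f \<theta> (m + E) l"
  shows "S_len f \<theta> E (m + E) < opt' \<and> L_len f \<theta> E (m + E) < S_len f \<theta> E (m + E) + opt' + E"
proof -
  let ?S = "S_len f \<theta> E m + E" and ?L = "L_len f \<theta> E m + E"
  define r where "r = (opt' + E - 1) div E * E"
  define switch where "switch = (f (avg \<theta> (m + E) ?S) \<le> f (avg \<theta> (m + E) ?L))"
  obtain q where q: "S_len f \<theta> E m = q * E"
  proof -
    have "E dvd S_len f \<theta> E m"
      using S_len_mod[of f \<theta> E m] assms(2) by (simp add: mod_eq_0_iff_dvd)
    then show thesis
      using that by (metis dvdE mult.commute)
  qed
  have S_le_r: "?S \<le> r"
    using multiple_le_round_up[of E q opt'] assms(1) S_lt opt_le q by (simp add: r_def)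
  have r_le: "r \<le> opt' + E - 1"
    by (simp add: r_def)
  have S_le_L: "?S \<le> ?L" and L_le: "?L \<le> m + E"
    using S_len_le_L_len[of f \<theta> E m] L_len_le[of f \<theta> E m] by simp_all
  have S_lt': "?S < opt'" if "\<not> switch"
  proof (rule ccontr)
    assume "\<not> ?S < opt'"
    then have "r \<le> ?S"
      using round_up_le_multiple[of E opt' "q + 1"] assms(1) q by (simp add: r_def)
    then have "r = ?S"
      using S_le_r by simp
    then have "favg f \<theta> (m + E) ?S \<le> favg f \<theta> (m + E) ?L"
      using plateau[of ?L] S_le_L L_le by (simp add: r_def)
    then have switch
      using assms(1) by (simp add: favg_def switch_def)
    with that show False ..
  qed
  show ?thesis
    using lengths_next_eval[OF assms(1,2), of f \<theta>] S_lt L_lt opt_le S_le_r r_le S_lt'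
    by (cases switch) (simp_all add: switch_def)
qed

lemma lengths_first_eval:
  "0 < E \<Longrightarrow> S_len f \<theta> E E = 0 \<and> L_len f \<theta> E E = E"
  using lengths_next_eval[of E 0 f \<theta>] by (simp add: S_len_def L_len_def)

lemma eval_lengths_bound:
  fixes f :: "real ^ 'd \<Rightarrow> real" and \<theta> :: "nat \<Rightarrow> real ^ 'd" and Opt :: "nat \<Rightarrow> nat"
  assumes "0 < E" "1 \<le> Opt E"
    and Opt_mono: "\<And>m. E dvd m \<Longrightarrow> E \<le> m \<Longrightarrow> Opt m \<le> Opt (m + E)"
    and plateau: "\<And>m l. E dvd m \<Longrightarrow> E \<le> m \<Longrightarrow> OptE_ceil Opt E m \<le> l \<Longrightarrow> l \<le> m \<Longrightarrow>
                   favg f \<theta> m (OptE_ceil Opt E m) \<le> favg f \<theta> m l"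
    and "E dvd n" "E \<le> n"
  shows "S_len f \<theta> E n < Opt n \<and> L_len f \<theta> E n < S_len f \<theta> E n + Opt n + E"
proof -
  obtain k where n: "n = k * E"
    using \<open>E dvd n\<close> by (metis dvdE mult.commute)
  with assms(1,6) have k: "1 \<le> k"
    by (cases k) auto
  from k show ?thesis
    unfolding n
  proof (induction k rule: dec_induct)
    case base
    then show ?case
      using lengths_first_eval[OF assms(1), of f \<theta>] assms(2) by simp
  next
    case (step k)
    have "E dvd k * E" "E \<le> k * E"
      using step.hyps by simp_all
    then show ?case
      using eval_lengths_step[OF assms(1) \<open>E dvd k * E\<close> step.IH[THEN conjunct1] step.IH[THEN conjunct2]
          Opt_mono] plateau[of "k * E + E"]
      by (simp add: OptE_ceil_def add.commute)
  qed
qed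

theorem mainTheorem2:
  fixes \<theta> :: "nat \<Rightarrow> real ^ 'd" and f :: "real ^ 'd \<Rightarrow> real"
    and E :: nat and Opt :: "nat \<Rightarrow> nat"
  assumes E_pos: "E \<ge> 1"
    and Opt_range: "\<And>t. t \<ge> 1 \<Longrightarrow> 1 \<le> Opt t \<and> Opt t \<le> t"
    and Opt_min: "\<And>t \<Delta>. t \<ge> 1 \<Longrightarrow> 1 \<le> \<Delta> \<Longrightarrow> \<Delta> \<le> t \<Longrightarrow>
                    f (avg \<theta> t (Opt t)) \<le> f (avg \<theta> t \<Delta>)"
    and A1: "\<And>n i j. E dvd n \<Longrightarrow> n \<ge> E \<Longrightarrow> i < j \<Longrightarrow> j * E \<le> OptE_floor Opt E n \<Longrightarrow>
               favg f \<theta> n (j * E) < favg f \<theta> n (i * E)"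
    and A2: "\<And>n n_plus. E dvd n \<Longrightarrow> n \<ge> E \<Longrightarrow> OptE_ceil Opt E n \<le> n_plus \<Longrightarrow> n_plus \<le> n \<Longrightarrow>
               favg f \<theta> n (OptE_ceil Opt E n) \<le> favg f \<theta> n n_plus"
    and A3: "\<And>n. E dvd n \<Longrightarrow> n \<ge> E \<Longrightarrow>
               \<exists>n_s. n_s > 0 \<and> E dvd n_s \<and> int (Opt (n + n_s)) - int (Opt n) < int n_s"
    and A4: "\<And>n. E dvd n \<Longrightarrow> n \<ge> E \<Longrightarrow> Opt n \<le> Opt (n + E)"
    and n_eval: "E dvd n" "n \<ge> E"
  shows "S_len f \<theta> E n < Opt n \<and> L_len f \<theta> E n < 2 * Opt n + E"
proof -
  have "0 < E" "1 \<le> Opt E"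
    using E_pos Opt_range[of E] by simp_all
  from eval_lengths_bound[OF this A4 A2 n_eval]
  show ?thesis
    by simp
qed

end
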